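(* Let $L$ be a subspace of $\bigwedge^{k}V$ and let $h\in[n]$. Suppose $L$ is monomial with respect to $e_h$, i.e. $L=\big(L\cap\bigwedge^{k}V^{(h)}\big)\oplus\big(L\cap(e_{h}\wedge\bigwedge^{k-1}V^{(h)})\big)$. If $1\leq i<j\leq n$ are distinct from $h$, then \begin{align*} N_{j\to i}L & =N_{j\to i}\Big(L\cap\bigwedge^{k}V^{(h)}\Big)\oplus N_{j\to i}\Big(L\cap\big(e_{h}\wedge\bigwedge^{k-1}V^{(h)}\big)\Big)\\ & =\Big(N_{j\to i}L\cap\bigwedge^{k}V^{(h)}\Big)\oplus\Big(N_{j\to i}L\cap\big(e_{h}\wedge\bigwedge^{k-1}V^{(h)}\big)\Big). \end{align*}
   Context: $\mathbb{F}$ is a field (assumed throughout the paper, for expository purposes, to have characteristic not $2$), $V$ is an $n$-dimensional $\mathbb{F}$-vector space with a fixed basis $e_1,\dots,e_n$, and $\bigwedge V$ its exterior algebra. For $j\in[n]$, $V^{(j)}$ is the span of $\{e_l:l\neq j\}$, and $\bigwedge V^{(j)}$ is viewed as a subalgebra of $\bigwedge V$. Slow shift: for distinct $i,j\in[n]$ and nonzero $m\in\bigwedge^kV$, write uniquely $m=x+e_j\wedge y$ with $x\in\bigwedge^kV^{(j)}$, $y\in\bigwedge^{k-1}V^{(j)}$, and set $N_{j\to i}m=x+e_i\wedge y$ if this is nonzero, and $N_{j\to i}m=e_j\wedge y$ otherwise (the limit as $t\to0$ of the projective action of the linear map $e_j\mapsto e_i+te_j$ fixing the other $e_l$). For a subspace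 $L$ of $\bigwedge^kV$, $N_{j\to i}L$ is the span of $\{N_{j\to i}m:m\in L\setminus\{0\}\}$ (and $N_{j\to i}\{0\}=\{0\}$); it has the same dimension as $L$. *)

theory Defs
  imports Complex_Main "HOL-Library.Function_Algebras"
begin

text \<open>Exterior algebra of V = F^n with basis e_1,...,e_n, in coordinates:
  an element is a function from index sets S (subsets of {1..n}) to coefficients,
  m = sum over S of m(S) e_S, where e_S = e_{s1} wedge ... wedge e_{sr}, s1 < ... < sr.\<close>

type_synonym 'a ext = "nat set \<Rightarrow> 'a"

definition esc :: "'a::field \<Rightarrow> 'a ext \<Rightarrow> 'a ext" where
  "esc c m = (\<lambda>S. c * m S)"

text \<open>Sign of e_S wedge e_T = sgn_pair S T * e_(S union T) for disjoint S, T.\<close>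
definition sgn_pair :: "nat set \<Rightarrow> nat set \<Rightarrow> 'a::field" where
  "sgn_pair S T = (-1) ^ card {(s, t). s \<in> S \<and> t \<in> T \<and> t < s}"

definition ewedge :: "'a::field ext \<Rightarrow> 'a ext \<Rightarrow> 'a ext" where
  "ewedge f g = (\<lambda>U. if finite U then (\<Sum>S\<in>Pow U. sgn_pair S (U - S) * f S * g (U - S)) else 0)"

definition ebasis :: "nat set \<Rightarrow> 'a::field ext" where
  "ebasis S = (\<lambda>T. if T = S then 1 else 0)"

text \<open>The k-th exterior power of V, and of V^(j) = span {e_l : l \<noteq> j}.\<close>
definition ext_pow :: "nat \<Rightarrow> nat \<Rightarrow> 'a::field ext set" where
  "ext_pow n k = {m. \<forall>S. m S \<noteq> 0 \<longrightarrow> finite S \<and> S \<subseteq> {1..n} \<and> card S = k}"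

definition ext_pow_off :: "nat \<Rightarrow> nat \<Rightarrow> nat \<Rightarrow> 'a::field ext set" where
  "ext_pow_off n k j = {m \<in> ext_pow n k. \<forall>S. m S \<noteq> 0 \<longrightarrow> j \<notin> S}"

definition ext_pow_with :: "nat \<Rightarrow> nat \<Rightarrow> nat \<Rightarrow> 'a::field ext set" where
  "ext_pow_with n k h = {ewedge (ebasis {h}) y | y. y \<in> ext_pow_off n (k - 1) h}"

definition esubspace :: "'a::field ext set \<Rightarrow> bool" where
  "esubspace L = module.subspace esc L"

definition espan :: "'a::field ext set \<Rightarrow> 'a ext set" where
  "espan X = module.span esc X"

definition is_dsum :: "'a::field ext set \<Rightarrow> 'a ext set \<Rightarrow> 'a ext set \<Rightarrow> bool" where
  "is_dsum C A B \<longleftrightarrow> C = {a + b | a b. a \<in> A \<and> b \<in> B} \<and> A \<inter> B = {0}"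

definition decomp :: "nat \<Rightarrow> nat \<Rightarrow> nat \<Rightarrow> 'a::field ext \<Rightarrow> 'a ext \<times> 'a ext" where
  "decomp n k j m = (THE (x, y). x \<in> ext_pow_off n k j \<and> y \<in> ext_pow_off n (k - 1) j
                                 \<and> m = x + ewedge (ebasis {j}) y)"

definition slow_shift_el :: "nat \<Rightarrow> nat \<Rightarrow> nat \<Rightarrow> nat \<Rightarrow> 'a::field ext \<Rightarrow> 'a ext" where
  "slow_shift_el n k j i m =
     (let (x, y) = decomp n k j m; z = x + ewedge (ebasis {i}) y
      in if z \<noteq> 0 then z else ewedge (ebasis {j}) y)"

text \<open>Slow shift of a subspace: span of the shifts of its nonzero elements
  (the span of the empty set is {0}, so N {0} = {0}).\<close>
definition slow_shift :: "nat \<Rightarrow> nat \<Rightarrow> nat \<Rightarrow> nat \<Rightarrow> 'a::field ext set \<Rightarrow> 'a ext set" where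
  "slow_shift n k j i L = espan (slow_shift_el n k j i ` (L - {0}))"

end

theory Submission imports Defs begin

text \<open>Write \<open>m = x + e\<^sub>j \<wedge> y\<close> with \<open>x, y\<close> free of \<open>e\<^sub>j\<close>. The map
  \<open>P m = x + e\<^sub>i \<wedge> y\<close> induced by \<open>e\<^sub>j \<mapsto> e\<^sub>i\<close> is linear, and the slow shift \<open>N m\<close> is
  \<open>P m\<close> unless \<open>P m = 0\<close>, in which case it is \<open>e\<^sub>j \<wedge> y = m - x\<close>, again linear in \<open>m\<close>.
  Since \<open>i, j \<noteq> h\<close>, \<open>P\<close> preserves both the subspace of elements avoiding \<open>e\<^sub>h\<close> and
  that of elements containing \<open>e\<^sub>h\<close>. Let \<open>L = A \<oplus> B\<close> be the splitting along \<open>e\<^sub>h\<close> and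
  \<open>m = a + b\<close>. If \<open>P m = 0\<close> then \<open>P a = P b = 0\<close>, so \<open>N m = (a - x\<^sub>a) + (b - x\<^sub>b)\<close>;
  otherwise \<open>N m = P a + P b\<close>. Each summand lies in \<open>N A\<close>, resp. \<open>N B\<close>, so
  \<open>N L = N A + N B\<close>; as \<open>N A\<close> and \<open>N B\<close> again avoid, resp. contain, \<open>e\<^sub>h\<close>, both
  decompositions follow.\<close>

interpretation E: module "esc :: 'a::field \<Rightarrow> 'a ext \<Rightarrow> 'a ext"
  by unfold_locales (auto simp: esc_def fun_eq_iff algebra_simps)

lemma subspace_supported_on: "E.subspace {m. \<forall>S. m S \<noteq> 0 \<longrightarrow> P S}"
  by (rule E.subspaceI) (auto simp: esc_def, metis add.left_neutral)

text \<open>Unlike \<^const>\<open>ext_pow_with\<close>, this lies in \<^const>\<open>ext_pow\<close> also for \<open>k = 0\<close>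
  or \<open>h \<notin> {1..n}\<close>.\<close>
definition ext_pow_on :: "nat \<Rightarrow> nat \<Rightarrow> nat \<Rightarrow> 'a::field ext set" where
  "ext_pow_on n k h = {m \<in> ext_pow n k. \<forall>S. m S \<noteq> 0 \<longrightarrow> h \<in> S}"

lemma subspace_ext_pow: "E.subspace (ext_pow n k)"
  unfolding ext_pow_def by (rule subspace_supported_on)

lemma subspace_ext_pow_off: "E.subspace (ext_pow_off n k h)"
proof -
  have eq: "ext_pow_off n k h =
    {m. \<forall>S. m S \<noteq> 0 \<longrightarrow> (finite S \<and> S \<subseteq> {1..n} \<and> card S = k) \<and> h \<notin> S}"
    by (auto simp: ext_pow_off_def ext_pow_def)
  show ?thesis unfolding eq by (rule subspace_supported_on)
qed

lemma subspace_ext_pow_on: "E.subspace (ext_pow_on n k h)"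
proof -
  have eq: "ext_pow_on n k h =
    {m. \<forall>S. m S \<noteq> 0 \<longrightarrow> (finite S \<and> S \<subseteq> {1..n} \<and> card S = k) \<and> h \<in> S}"
    by (auto simp: ext_pow_on_def ext_pow_def)
  show ?thesis unfolding eq by (rule subspace_supported_on)
qed

lemma ext_pow_off_Int_ext_pow_on: "ext_pow_off n k h \<inter> ext_pow_on n k h = {0}"
  by (auto simp: ext_pow_off_def ext_pow_on_def ext_pow_def fun_eq_iff)

lemma sum_set_Int_subspace:
  assumes C: "C = {a + b |a b. a \<in> A \<and> b \<in> B}" "0 \<in> B"
    and AB: "A \<subseteq> X" "B \<subseteq> Y" and XY: "E.subspace X" "X \<inter> Y = {0}"
  shows "C \<inter> X = A"
proof
  show "A \<subseteq> C \<inter> X" using C AB by force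
  show "C \<inter> X \<subseteq> A"
  proof
    fix c assume "c \<in> C \<inter> X"
    then obtain a b where c: "c = a + b" "a \<in> A" "b \<in> B" "c \<in> X" using C by blast
    then have "b \<in> X \<inter> Y"
      using AB E.subspace_diff[OF XY(1), of c a] by (auto simp: algebra_simps)
    with XY(2) c show "c \<in> A" by auto
  qed
qed

lemma is_dsum_complementary:
  assumes C: "C = {a + b |a b. a \<in> A \<and> b \<in> B}" "0 \<in> A" "0 \<in> B"
    and AB: "A \<subseteq> X" "B \<subseteq> Y"
    and XY: "E.subspace X" "E.subspace Y" "X \<inter> Y = {0}"
  shows "is_dsum C A B \<and> C \<inter> X = A \<and> C \<inter> Y = B"
proof (intro conjI)
  show "is_dsum C A B"
    using C AB XY(3) by (auto simp: is_dsum_def)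
  show "C \<inter> X = A"
    using C(1,3) AB XY(1,3) by (rule sum_set_Int_subspace)
  have "C = {b + a |b a. b \<in> B \<and> a \<in> A}"
    using C(1) by (auto; metis add.commute)
  then show "C \<inter> Y = B"
    using C(2) AB XY(2,3) sum_set_Int_subspace[of C B A Y X] by (simp add: Int_commute)
qed

lemma ewedge_ebasis_singleton:
  "ewedge (ebasis {i}) y U = (if finite U \<and> i \<in> U then sgn_pair {i} (U - {i}) * y (U - {i}) else 0)"
proof (cases "finite U")
  case True
  have "(\<Sum>S\<in>Pow U. sgn_pair S (U - S) * ebasis {i} S * y (U - S))
      = (\<Sum>S\<in>Pow U. if S = {i} then sgn_pair {i} (U - {i}) * y (U - {i}) else 0)"
    by (rule sum.cong) (auto simp: ebasis_def)
  with True show ?thesis by (simp add: ewedge_def)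
qed (simp add: ewedge_def)

lemma sgn_pair_square: "sgn_pair A B * (sgn_pair A B :: 'a::field) = 1"
  by (simp add: sgn_pair_def flip: power_mult_distrib)

definition part_off :: "nat \<Rightarrow> 'a::field ext \<Rightarrow> 'a ext" where
  "part_off j m = (\<lambda>S. if j \<in> S then 0 else m S)"

text \<open>The interior product with the dual basis vector \<open>e\<^sub>j\<^sup>*\<close>.\<close>
definition contract :: "nat \<Rightarrow> 'a::field ext \<Rightarrow> 'a ext" where
  "contract j m = (\<lambda>T. if j \<in> T then 0 else sgn_pair {j} T * m (insert j T))"

lemma part_off_supported_on:
  "m \<in> {m. \<forall>S. m S \<noteq> 0 \<longrightarrow> P S} \<Longrightarrow> part_off j m \<in> {m. \<forall>S. m S \<noteq> 0 \<longrightarrow> P S}"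
  by (simp add: part_off_def)

lemma part_off_zero [simp]: "part_off j 0 = 0"
  by (simp add: part_off_def fun_eq_iff)

lemma part_off_add: "part_off j (a + b) = part_off j a + part_off j b"
  by (simp add: part_off_def fun_eq_iff)

lemma ext_pow_decompose:
  assumes "m \<in> ext_pow n k"
  shows "m = part_off j m + ewedge (ebasis {j}) (contract j m)"
proof
  fix U :: "nat set"
  have "m U = 0" if "infinite U" using assms that by (auto simp: ext_pow_def)
  moreover have "insert j (U - {j}) = U" if "j \<in> U" using that by auto
  ultimately show "m U = (part_off j m + ewedge (ebasis {j}) (contract j m)) U"
    using sgn_pair_square[of "{j}" "U - {j}", where 'a='a]
    by (auto simp: part_off_def contract_def ewedge_ebasis_singleton mult.assoc[symmetric])
qed

lemma part_off_mem: "m \<in> ext_pow n k \<Longrightarrow> part_off j m \<in> ext_pow_off n k j"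
  by (auto simp: ext_pow_off_def ext_pow_def part_off_def split: if_splits)

lemma contract_mem: "m \<in> ext_pow n k \<Longrightarrow> contract j m \<in> ext_pow_off n (k - 1) j"
  by (fastforce simp: ext_pow_off_def ext_pow_def contract_def split: if_splits)

lemma part_off_decomposed:
  "x \<in> ext_pow_off n k j \<Longrightarrow> part_off j (x + ewedge (ebasis {j}) y) = x"
  by (auto simp: part_off_def ewedge_ebasis_singleton ext_pow_off_def fun_eq_iff)

lemma contract_decomposed:
  assumes "x \<in> ext_pow_off n k j" "y \<in> ext_pow_off n k' j"
  shows "contract j (x + ewedge (ebasis {j}) y) = y"
proof
  fix T
  have "x (insert j T) = 0" "y T = 0 \<or> (j \<notin> T \<and> finite T)"
    using assms by (auto simp: ext_pow_off_def ext_pow_def)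
  then show "contract j (x + ewedge (ebasis {j}) y) T = y T"
    using sgn_pair_square[of "{j}" T, where 'a='a]
    by (auto simp: contract_def ewedge_ebasis_singleton mult.assoc[symmetric])
qed

lemma decomp_eq:
  assumes "m \<in> ext_pow n k"
  shows "decomp n k j m = (part_off j m, contract j m)"
  unfolding decomp_def
proof (rule the_equality)
  show "case (part_off j m, contract j m) of (x, y) \<Rightarrow>
      x \<in> ext_pow_off n k j \<and> y \<in> ext_pow_off n (k - 1) j \<and> m = x + ewedge (ebasis {j}) y"
    using part_off_mem[OF assms] contract_mem[OF assms] ext_pow_decompose[OF assms] by simp
next
  fix p
  assume "case p of (x, y) \<Rightarrow>
      x \<in> ext_pow_off n k j \<and> y \<in> ext_pow_off n (k - 1) j \<and> m = x + ewedge (ebasis {j}) y"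
  then show "p = (part_off j m, contract j m)"
    by (auto simp: part_off_decomposed contract_decomposed)
qed

lemma ext_pow_Int_ext_pow_with:
  "ext_pow n k \<inter> ext_pow_with n k h = (ext_pow_on n k h :: 'a::field ext set)"
  (is "?L = ?R")
proof
  show "?L \<subseteq> ?R"
    by (auto simp: ext_pow_with_def ext_pow_on_def ewedge_ebasis_singleton split: if_splits)
  show "?R \<subseteq> ?L"
  proof
    fix m assume m: "m \<in> ?R"
    then have "part_off h m = 0"
      by (auto simp: ext_pow_on_def part_off_def fun_eq_iff)
    with m show "m \<in> ?L"
      using ext_pow_decompose[of m n k h] contract_mem[of m n k h]
      by (auto simp: ext_pow_on_def ext_pow_with_def)
  qed
qed

text \<open>The endomorphism of the exterior algebra induced by \<open>e\<^sub>j \<mapsto> e\<^sub>i\<close>.\<close>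
definition index_subst :: "nat \<Rightarrow> nat \<Rightarrow> 'a::field ext \<Rightarrow> 'a ext" where
  "index_subst j i m = part_off j m + ewedge (ebasis {i}) (contract j m)"

lemma slow_shift_el_eq:
  assumes "m \<in> ext_pow n k"
  shows "slow_shift_el n k j i m =
    (if index_subst j i m \<noteq> 0 then index_subst j i m else m - part_off j m)"
  using ext_pow_decompose[OF assms, of j]
  by (simp add: slow_shift_el_def decomp_eq[OF assms] index_subst_def Let_def algebra_simps)

lemma index_subst_zero [simp]: "index_subst j i 0 = 0"
  by (simp add: index_subst_def part_off_def contract_def ewedge_ebasis_singleton fun_eq_iff)

lemma index_subst_add: "index_subst j i (a + b) = index_subst j i a + index_subst j i b"
  by (simp add: index_subst_def part_off_def contract_def ewedge_ebasis_singleton fun_eq_iff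
      algebra_simps)

lemma support_wedge_contract:
  assumes "ewedge (ebasis {i}) (contract j m) U \<noteq> 0"
  obtains S where "m S \<noteq> 0" "j \<in> S" "i \<notin> S - {j}" "U = insert i (S - {j})" "finite U"
proof
  show "m (insert j (U - {i})) \<noteq> 0" "j \<in> insert j (U - {i})" "i \<notin> insert j (U - {i}) - {j}"
      "U = insert i (insert j (U - {i}) - {j})" "finite U"
    using assms by (auto simp: ewedge_ebasis_singleton contract_def split: if_splits)
qed

lemma wedge_contract_mem_ext_pow:
  assumes m: "m \<in> ext_pow n k" and i: "i \<in> {1..n}"
  shows "ewedge (ebasis {i}) (contract j m) \<in> ext_pow n k"
  unfolding ext_pow_def
proof (intro CollectI allI impI)
  fix U assume "ewedge (ebasis {i}) (contract j m) U \<noteq> 0"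
  then obtain S where S: "m S \<noteq> 0" "j \<in> S" "i \<notin> S - {j}" "U = insert i (S - {j})"
    by (rule support_wedge_contract)
  with m have "finite S" "S \<subseteq> {1..n}" "card S = k" by (auto simp: ext_pow_def)
  with S i show "finite U \<and> U \<subseteq> {1..n} \<and> card U = k"
    using card_Suc_Diff1[of S j] by (cases "i = j") (auto simp: insert_absorb)
qed

lemma index_subst_mem_ext_pow:
  assumes "m \<in> ext_pow n k" "i \<in> {1..n}"
  shows "index_subst j i m \<in> ext_pow n k"
proof -
  have "part_off j m \<in> ext_pow n k"
    using assms(1) unfolding ext_pow_def by (rule part_off_supported_on)
  with assms show ?thesis
    unfolding index_subst_def
    by (intro E.subspace_add[OF subspace_ext_pow] wedge_contract_mem_ext_pow)
qed

lemma index_subst_support: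
  assumes "index_subst j i m U \<noteq> 0" "h \<noteq> i" "h \<noteq> j"
  obtains S where "m S \<noteq> 0" "h \<in> U \<longleftrightarrow> h \<in> S"
proof (cases "part_off j m U = 0")
  case True
  with assms(1) have "ewedge (ebasis {i}) (contract j m) U \<noteq> 0"
    by (simp add: index_subst_def)
  then obtain S where "m S \<noteq> 0" "U = insert i (S - {j})"
    by (rule support_wedge_contract)
  with assms(2,3) that show ?thesis by auto
next
  case False
  with that show ?thesis by (auto simp: part_off_def split: if_splits)
qed

lemma index_subst_mem_ext_pow_off:
  assumes "m \<in> ext_pow_off n k h" "i \<in> {1..n}" "h \<noteq> i" "h \<noteq> j"
  shows "index_subst j i m \<in> ext_pow_off n k h"
  using assms index_subst_mem_ext_pow[of m n k i j] index_subst_support[of j i m _ h]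
  unfolding ext_pow_off_def by blast

lemma index_subst_mem_ext_pow_on:
  assumes "m \<in> ext_pow_on n k h" "i \<in> {1..n}" "h \<noteq> i" "h \<noteq> j"
  shows "index_subst j i m \<in> ext_pow_on n k h"
  using assms index_subst_mem_ext_pow[of m n k i j] index_subst_support[of j i m _ h]
  unfolding ext_pow_on_def by blast

lemma slow_shift_least:
  assumes "E.subspace W" "\<And>m. m \<in> L \<Longrightarrow> m \<noteq> 0 \<Longrightarrow> slow_shift_el n k j i m \<in> W"
  shows "slow_shift n k j i L \<subseteq> W"
  unfolding slow_shift_def espan_def using assms by (intro E.span_minimal) auto

lemma slow_shift_subset_invariant:
  assumes W: "E.subspace W" "W \<subseteq> ext_pow n k" and L: "L \<subseteq> W"
    and part_off: "\<And>m. m \<in> W \<Longrightarrow> part_off j m \<in> W"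
    and index_subst: "\<And>m. m \<in> W \<Longrightarrow> index_subst j i m \<in> W"
  shows "slow_shift n k j i L \<subseteq> W"
proof (rule slow_shift_least[OF W(1)])
  fix m assume "m \<in> L"
  with L have "m \<in> W" by blast
  with W part_off index_subst show "slow_shift_el n k j i m \<in> W"
    by (auto simp: slow_shift_el_eq E.subspace_diff)
qed

lemma slow_shift_ext_pow:
  assumes "L \<subseteq> ext_pow n k" "i \<in> {1..n}"
  shows "slow_shift n k j i L \<subseteq> ext_pow n k"
proof (rule slow_shift_subset_invariant[OF subspace_ext_pow order_refl assms(1)])
  show "part_off j m \<in> ext_pow n k" if "m \<in> ext_pow n k" for m :: "'a ext"
    using that unfolding ext_pow_def by (rule part_off_supported_on)
qed (rule index_subst_mem_ext_pow[OF _ assms(2)])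

lemma slow_shift_ext_pow_off:
  assumes "L \<subseteq> ext_pow_off n k h" "i \<in> {1..n}" "h \<noteq> i" "h \<noteq> j"
  shows "slow_shift n k j i L \<subseteq> ext_pow_off n k h"
proof (rule slow_shift_subset_invariant[OF subspace_ext_pow_off _ assms(1)])
  show "part_off j m \<in> ext_pow_off n k h" if "m \<in> ext_pow_off n k h" for m :: "'a ext"
    using that by (auto simp: ext_pow_off_def ext_pow_def part_off_def)
  show "ext_pow_off n k h \<subseteq> ext_pow n k" by (auto simp: ext_pow_off_def)
  show "index_subst j i m \<in> ext_pow_off n k h" if "m \<in> ext_pow_off n k h" for m :: "'a ext"
    using that assms(2-4) by (rule index_subst_mem_ext_pow_off)
qed

lemma slow_shift_ext_pow_on:
  assumes "L \<subseteq> ext_pow_on n k h" "i \<in> {1..n}" "h \<noteq> i" "h \<noteq> j"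
  shows "slow_shift n k j i L \<subseteq> ext_pow_on n k h"
proof (rule slow_shift_subset_invariant[OF subspace_ext_pow_on _ assms(1)])
  show "part_off j m \<in> ext_pow_on n k h" if "m \<in> ext_pow_on n k h" for m :: "'a ext"
    using that by (auto simp: ext_pow_on_def ext_pow_def part_off_def)
  show "ext_pow_on n k h \<subseteq> ext_pow n k" by (auto simp: ext_pow_on_def)
  show "index_subst j i m \<in> ext_pow_on n k h" if "m \<in> ext_pow_on n k h" for m :: "'a ext"
    using that assms(2-4) by (rule index_subst_mem_ext_pow_on)
qed

lemma subspace_slow_shift: "E.subspace (slow_shift n k j i L)"
  by (simp add: slow_shift_def espan_def)

lemma slow_shift_mono: "A \<subseteq> B \<Longrightarrow> slow_shift n k j i A \<subseteq> slow_shift n k j i B"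
  unfolding slow_shift_def espan_def by (intro E.span_mono image_mono Diff_mono) auto

lemma slow_shift_Un:
  "slow_shift n k j i (A \<union> B) =
    {x + y |x y. x \<in> slow_shift n k j i A \<and> y \<in> slow_shift n k j i B}"
  by (simp add: slow_shift_def espan_def Un_Diff image_Un E.span_Un)

lemma slow_shift_el_mem_slow_shift:
  "m \<in> A \<Longrightarrow> m \<noteq> 0 \<Longrightarrow> slow_shift_el n k j i m \<in> slow_shift n k j i A"
  unfolding slow_shift_def espan_def by (intro E.span_base imageI) simp

lemma index_subst_mem_slow_shift:
  assumes "A \<subseteq> ext_pow n k" "m \<in> A"
  shows "index_subst j i m \<in> slow_shift n k j i A"
proof (cases "index_subst j i m = 0")
  case False
  then have "m \<noteq> 0" by auto
  with assms have "slow_shift_el n k j i m \<in> slow_shift n k j i A"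
    by (intro slow_shift_el_mem_slow_shift)
  with assms False show ?thesis by (simp add: slow_shift_el_eq subsetD)
qed (simp add: subspace_slow_shift E.subspace_0)

lemma diff_part_off_mem_slow_shift:
  assumes "A \<subseteq> ext_pow n k" "m \<in> A" "index_subst j i m = 0"
  shows "m - part_off j m \<in> slow_shift n k j i A"
proof (cases "m = 0")
  case False
  with assms have "slow_shift_el n k j i m \<in> slow_shift n k j i A"
    by (intro slow_shift_el_mem_slow_shift)
  with assms show ?thesis by (simp add: slow_shift_el_eq subsetD)
qed (simp add: subspace_slow_shift E.subspace_0)

lemma slow_shift_el_sum_mem:
  assumes ab: "a \<in> A" "b \<in> B" and A: "A \<subseteq> ext_pow_off n k h" and B: "B \<subseteq> ext_pow_on n k h"
    and ij: "i \<in> {1..n}" "h \<noteq> i" "h \<noteq> j"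
  shows "slow_shift_el n k j i (a + b) \<in> slow_shift n k j i (A \<union> B)"
proof -
  let ?N = "slow_shift n k j i" and ?P = "index_subst j i"
  have A_ext: "A \<subseteq> ext_pow n k" and B_ext: "B \<subseteq> ext_pow n k"
    using A B by (auto simp: ext_pow_off_def ext_pow_on_def)
  have NA: "?N A \<subseteq> ?N (A \<union> B)" and NB: "?N B \<subseteq> ?N (A \<union> B)"
    by (simp_all add: slow_shift_mono)
  have ab_ext: "a + b \<in> ext_pow n k"
    using ab A_ext B_ext E.subspace_add[OF subspace_ext_pow] by blast
  show ?thesis
  proof (cases "?P (a + b) = 0")
    case False
    then have "slow_shift_el n k j i (a + b) = ?P a + ?P b"
      using ab_ext by (simp add: slow_shift_el_eq index_subst_add)
    with ab A_ext B_ext NA NB show ?thesis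
      by (auto intro!: E.subspace_add[OF subspace_slow_shift] index_subst_mem_slow_shift)
  next
    case True
    have "?P a \<in> ext_pow_off n k h" "?P b \<in> ext_pow_on n k h"
      using ab A B ij by (auto intro: index_subst_mem_ext_pow_off index_subst_mem_ext_pow_on)
    moreover have "?P a = - ?P b"
      using True by (simp add: index_subst_add eq_neg_iff_add_eq_0)
    ultimately have "?P a \<in> ext_pow_off n k h \<inter> ext_pow_on n k h"
      using E.subspace_neg[OF subspace_ext_pow_on] by auto
    then have Pa: "?P a = 0" and Pb: "?P b = 0"
      using True by (auto simp: ext_pow_off_Int_ext_pow_on index_subst_add)
    have "slow_shift_el n k j i (a + b) = (a - part_off j a) + (b - part_off j b)"
      using ab_ext True by (simp add: slow_shift_el_eq part_off_add)
    with ab A_ext B_ext NA NB Pa Pb show ?thesis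
      by (auto intro!: E.subspace_add[OF subspace_slow_shift] diff_part_off_mem_slow_shift)
  qed
qed

lemma slow_shift_of_sum:
  assumes L: "L = {a + b |a b. a \<in> A \<and> b \<in> B}" "0 \<in> A" "0 \<in> B"
    and A: "A \<subseteq> ext_pow_off n k h" and B: "B \<subseteq> ext_pow_on n k h"
    and ij: "i \<in> {1..n}" "h \<noteq> i" "h \<noteq> j"
  shows "slow_shift n k j i L =
    {x + y |x y. x \<in> slow_shift n k j i A \<and> y \<in> slow_shift n k j i B}"
proof -
  have "A \<union> B \<subseteq> L"
    using L by force
  moreover have "slow_shift n k j i L \<subseteq> slow_shift n k j i (A \<union> B)"
  proof (rule slow_shift_least[OF subspace_slow_shift])
    fix m assume "m \<in> L"
    with L obtain a b where "m = a + b" "a \<in> A" "b \<in> B" by blast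
    with A B ij show "slow_shift_el n k j i m \<in> slow_shift n k j i (A \<union> B)"
      by (simp add: slow_shift_el_sum_mem)
  qed
  ultimately have "slow_shift n k j i L = slow_shift n k j i (A \<union> B)"
    by (blast dest: slow_shift_mono)
  then show ?thesis by (simp add: slow_shift_Un)
qed

theorem lemma3p4:
  fixes L :: "'a::field ext set" and n k h i j :: nat
  assumes char: "(2::'a) \<noteq> 0"
    and subL: "esubspace L" and Lk: "L \<subseteq> ext_pow n k"
    and h: "h \<in> {1..n}"
    and mono: "is_dsum L (L \<inter> ext_pow_off n k h) (L \<inter> ext_pow_with n k h)"
    and ij: "1 \<le> i" "i < j" "j \<le> n" "i \<noteq> h" "j \<noteq> h"
  shows "is_dsum (slow_shift n k j i L)
           (slow_shift n k j i (L \<inter> ext_pow_off n k h))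
           (slow_shift n k j i (L \<inter> ext_pow_with n k h))
       \<and> is_dsum (slow_shift n k j i L)
           (slow_shift n k j i L \<inter> ext_pow_off n k h)
           (slow_shift n k j i L \<inter> ext_pow_with n k h)"
proof -
  let ?N = "slow_shift n k j i"
  define A where "A = L \<inter> ext_pow_off n k h"
  define B where "B = L \<inter> ext_pow_on n k h"
  have B_eq: "L \<inter> ext_pow_with n k h = B"
    using Lk ext_pow_Int_ext_pow_with[of n k h] by (auto simp: B_def)
  have L: "L = {a + b |a b. a \<in> A \<and> b \<in> B}" "0 \<in> A" "0 \<in> B"
    using mono by (auto simp: is_dsum_def A_def B_eq)
  have i: "i \<in> {1..n}" using ij by auto
  have NA: "?N A \<subseteq> ext_pow_off n k h"
    using ij by (intro slow_shift_ext_pow_off) (auto simp: A_def)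
  have NB: "?N B \<subseteq> ext_pow_on n k h"
    using ij by (intro slow_shift_ext_pow_on) (auto simp: B_def)
  have "?N L = {x + y |x y. x \<in> ?N A \<and> y \<in> ?N B}"
    using L ij by (intro slow_shift_of_sum) (auto simp: A_def B_def)
  then have "is_dsum (?N L) (?N A) (?N B) \<and> ?N L \<inter> ext_pow_off n k h = ?N A
      \<and> ?N L \<inter> ext_pow_on n k h = ?N B"
    using NA NB
    by (intro is_dsum_complementary subspace_ext_pow_off subspace_ext_pow_on
        ext_pow_off_Int_ext_pow_on E.subspace_0[OF subspace_slow_shift])
  moreover have "?N L \<inter> ext_pow_with n k h = ?N L \<inter> ext_pow_on n k h"
    using slow_shift_ext_pow[OF Lk i] ext_pow_Int_ext_pow_with[of n k h] by blast
  ultimately show ?thesis by (simp add: A_def B_eq)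
qed

end
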